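(* Let $(\mathcal{T}^h,\Sigma^h)$ be a fixed non-degenerate tessellation and let $\{\rho^\epsilon\}_{\epsilon>0}\subset\mathcal{P}(\mathcal{T}^h)$ with $\rho^\epsilon\rightharpoonup\rho$ in $\mathcal{P}(\mathcal{T}^h)$ as $\epsilon\to0$. Then \[ \lim_{\epsilon\to0}\mathcal{D}_{\epsilon,h}(\rho^\epsilon)=\mathcal{D}_{\mathrm{up},h}(\rho)=2\sum_{(K,L)\in\Sigma^h}\tau_{K|L}\,\alpha^*_0\Big(u_K,u_L,\frac{q_{K|L}}2\Big),\qquad \alpha^*_0(a,b,q)=\frac12\big(a(q^+)^2+b(q^-)^2\big), \] where $u_K=\rho_K/|K|$ and $q_{K|L}$ is computed from the limit $\rho$.
   Context: Tessellation $(\mathcal{T}^h,\Sigma^h)$ of a bounded convex open $\Omega\subset\mathbb{R}^d$: mutually disjoint open convex cells, $\Sigma^h$ ordered pairs sharing a face $(K|L)$ of positive $\mathcal{H}^{d-1}$-measure, $x_K$ barycenter, $\tau_{K|L}=|(K|L)|/|x_L-x_K|$; non-degenerate (some $\zeta\in(0,1)$ with $B(x_K,\zeta h)\subset K$, $|(K|L)|\ge\zeta h^{d-1}$). $V\in\mathrm{Lip}\cap C^1(\mathbb{R}^d)$ bounded below, $W\ge0$ symmetric with $W\in\mathrm{Lip}(\mathbb{R}^d)\cap C^1(\mathbb{R}^d\setminus\{0\})$; for $\rho\in\mathcal{P}(\mathcal{T}^h)$: $u_K=\rho_K/|K|$, $q_{K|L}=V(x_L)-V(x_K)+\sum_M\rho_M(W(x_L-x_M)-W(x_K-x_M))$;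 $x^\pm\ge0$ the positive/negative parts. $\Lambda(s,t)=\frac{s-t}{\log s-\log t}$, $\Lambda_H(s,t)=st/\Lambda(s,t)$; $\alpha^*_\epsilon(a,b,\xi)=\epsilon\int_0^\xi\sinh(x/\epsilon)\Lambda_H(ae^{-x/\epsilon},be^{x/\epsilon})\mathrm{d}x$; $\beta_\epsilon(a,b)=\alpha^*_\epsilon(a,b,-\epsilon\log\sqrt{b/a})$ (extended continuously when $a$ or $b$ is $0$); $\mathfrak h(s)=\frac14\frac{e^s-1-s}{\sinh^2(s/2)}$, $\mathbb{h}_\epsilon(a,b,q)=\int_0^1[a\mathfrak h(\lambda q/\epsilon)+b\mathfrak h(-\lambda q/\epsilon)](1-\lambda)\mathrm{d}\lambda$. The discrete Fisher information is $\mathcal{D}_{\epsilon,h}(\rho)=2\sum_{\Sigma^h}\beta_\epsilon(u_K,u_L)\tau_{K|L}+\frac\epsilon2\sum_{\Sigma^h}(u_L-u_K)q_{K|L}\tau_{K|L}+\frac12\sum_{\Sigma^h}|q_{K|L}|^2\mathbb{h}_\epsilon(u_K,u_L,q_{K|L})\tau_{K|L}$ (which equals $2\sum_{\Sigma^h}\tau_{K|L}\alpha^*_\epsilon(u_K,u_L,\xi_{K|L}/2)$ with $\xi_{K|L}=\epsilon\log(u_K/u_L)-q_{K|L}$). *)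

theory Defs
  imports "HOL-Analysis.Analysis"
begin

definition omega_vol :: "nat \<Rightarrow> real" where
  "omega_vol s = pi powr (real s / 2) / Gamma (real s / 2 + 1)"

text \<open>The s-dimensional Hausdorff measure, normalised as usual
 (with the convention (diam C)^0 = 1 for nonempty C).\<close>
definition hausdorff_pre :: "nat \<Rightarrow> real \<Rightarrow> 'a::metric_space set \<Rightarrow> ennreal" where
  "hausdorff_pre s \<delta> A =
     (INF C \<in> {C :: nat \<Rightarrow> 'a set. A \<subseteq> (\<Union>i. C i) \<and> (\<forall>i. diameter (C i) \<le> \<delta>)}.
        (\<Sum>i. ennreal (if C i = {} then 0 else omega_vol s * (diameter (C i) / 2) ^ s)))"

definition hausdorff_measure :: "nat \<Rightarrow> 'a::metric_space set \<Rightarrow> ennreal" where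
  "hausdorff_measure s A = (SUP \<delta> \<in> {0<..}. hausdorff_pre s \<delta> A)"

definition vol :: "'a::euclidean_space set \<Rightarrow> real" where
  "vol K = measure lebesgue K"

definition bary :: "'a::euclidean_space set \<Rightarrow> 'a" where
  "bary K = integral K (\<lambda>x. x) /\<^sub>R vol K"

definition face_meas :: "'a::euclidean_space set \<Rightarrow> 'a set \<Rightarrow> real" where
  "face_meas K L = enn2real (hausdorff_measure (DIM('a) - 1) (closure K \<inter> closure L))"

definition edges :: "'a::euclidean_space set set \<Rightarrow> ('a set \<times> 'a set) set" where
  "edges T = {(K, L). K \<in> T \<and> L \<in> T \<and> K \<noteq> L \<and>
                hausdorff_measure (DIM('a) - 1) (closure K \<inter> closure L) > 0}"

definition tau :: "'a::euclidean_space set \<Rightarrow> 'a set \<Rightarrow> real" where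
  "tau K L = face_meas K L / dist (bary L) (bary K)"

definition mesh :: "'a::euclidean_space set set \<Rightarrow> real" where
  "mesh T = Max (diameter ` T)"

definition tessellation :: "'a::euclidean_space set \<Rightarrow> 'a set set \<Rightarrow> bool" where
  "tessellation \<Omega> T \<longleftrightarrow>
     bounded \<Omega> \<and> convex \<Omega> \<and> open \<Omega> \<and> finite T \<and> T \<noteq> {} \<and>
     (\<forall>K\<in>T. open K \<and> convex K \<and> K \<noteq> {} \<and> K \<subseteq> \<Omega>) \<and>
     (\<forall>K\<in>T. \<forall>L\<in>T. K \<noteq> L \<longrightarrow> K \<inter> L = {}) \<and>
     closure \<Omega> = \<Union> (closure ` T)"

definition nondegenerate :: "'a::euclidean_space set set \<Rightarrow> bool" where
  "nondegenerate T \<longleftrightarrow>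
     (\<exists>\<zeta>. 0 < \<zeta> \<and> \<zeta> < 1 \<and>
        (\<forall>K\<in>T. ball (bary K) (\<zeta> * mesh T) \<subseteq> K) \<and>
        (\<forall>(K, L)\<in>edges T. face_meas K L \<ge> \<zeta> * mesh T ^ (DIM('a) - 1)))"

definition prob_on :: "'a set set \<Rightarrow> ('a set \<Rightarrow> real) \<Rightarrow> bool" where
  "prob_on T \<rho> \<longleftrightarrow> (\<forall>K\<in>T. 0 \<le> \<rho> K) \<and> (\<Sum>K\<in>T. \<rho> K) = 1"

definition dens :: "('a::euclidean_space set \<Rightarrow> real) \<Rightarrow> 'a set \<Rightarrow> real" where
  "dens \<rho> K = \<rho> K / vol K"

definition qKL :: "('a::euclidean_space \<Rightarrow> real) \<Rightarrow> ('a \<Rightarrow> real) \<Rightarrow> 'a set set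
                    \<Rightarrow> ('a set \<Rightarrow> real) \<Rightarrow> 'a set \<Rightarrow> 'a set \<Rightarrow> real" where
  "qKL V W T \<rho> K L = V (bary L) - V (bary K) +
     (\<Sum>M\<in>T. \<rho> M * (W (bary L - bary M) - W (bary K - bary M)))"

definition LogMean :: "real \<Rightarrow> real \<Rightarrow> real" where
  "LogMean s t = (if s = 0 \<or> t = 0 then 0 else if s = t then s else (s - t) / (ln s - ln t))"

definition LogMeanH :: "real \<Rightarrow> real \<Rightarrow> real" where
  "LogMeanH s t = (if s = 0 \<or> t = 0 then 0 else s * t / LogMean s t)"

definition alpha_star :: "real \<Rightarrow> real \<Rightarrow> real \<Rightarrow> real \<Rightarrow> real" where
  "alpha_star \<epsilon> a b \<xi> = \<epsilon> * interval_lebesgue_integral lborel (ereal 0) (ereal \<xi>)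
      (\<lambda>x. sinh (x / \<epsilon>) * LogMeanH (a * exp (- x / \<epsilon>)) (b * exp (x / \<epsilon>)))"

definition beta_pos :: "real \<Rightarrow> real \<Rightarrow> real \<Rightarrow> real" where
  "beta_pos \<epsilon> a b = alpha_star \<epsilon> a b (- \<epsilon> * ln (sqrt (b / a)))"

definition beta :: "real \<Rightarrow> real \<Rightarrow> real \<Rightarrow> real" where
  "beta \<epsilon> a b = (if 0 < a \<and> 0 < b then beta_pos \<epsilon> a b
      else Lim (at (a, b) within {p. 0 < fst p \<and> 0 < snd p}) (\<lambda>p. beta_pos \<epsilon> (fst p) (snd p)))"

definition frakh :: "real \<Rightarrow> real" where
  "frakh s = (if s = 0 then 1 / 2 else (exp s - 1 - s) / (4 * (sinh (s / 2))\<^sup>2))"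

definition hh :: "real \<Rightarrow> real \<Rightarrow> real \<Rightarrow> real \<Rightarrow> real" where
  "hh \<epsilon> a b q = interval_lebesgue_integral lborel (ereal 0) (ereal 1)
      (\<lambda>t. (a * frakh (t * q / \<epsilon>) + b * frakh (- t * q / \<epsilon>)) * (1 - t))"

definition alpha0 :: "real \<Rightarrow> real \<Rightarrow> real \<Rightarrow> real" where
  "alpha0 a b q = (a * (max q 0)\<^sup>2 + b * (max (- q) 0)\<^sup>2) / 2"

definition D_eps :: "real \<Rightarrow> ('a::euclidean_space \<Rightarrow> real) \<Rightarrow> ('a \<Rightarrow> real) \<Rightarrow> 'a set set
                      \<Rightarrow> ('a set \<Rightarrow> real) \<Rightarrow> real" where
  "D_eps \<epsilon> V W T \<rho> =
     2 * (\<Sum>(K, L)\<in>edges T. beta \<epsilon> (dens \<rho> K) (dens \<rho> L) * tau K L)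
   + \<epsilon> / 2 * (\<Sum>(K, L)\<in>edges T. (dens \<rho> L - dens \<rho> K) * qKL V W T \<rho> K L * tau K L)
   + 1 / 2 * (\<Sum>(K, L)\<in>edges T. (qKL V W T \<rho> K L)\<^sup>2
                 * hh \<epsilon> (dens \<rho> K) (dens \<rho> L) (qKL V W T \<rho> K L) * tau K L)"

definition D_up :: "('a::euclidean_space \<Rightarrow> real) \<Rightarrow> ('a \<Rightarrow> real) \<Rightarrow> 'a set set
                      \<Rightarrow> ('a set \<Rightarrow> real) \<Rightarrow> real" where
  "D_up V W T \<rho> =
     2 * (\<Sum>(K, L)\<in>edges T. tau K L * alpha0 (dens \<rho> K) (dens \<rho> L) (qKL V W T \<rho> K L / 2))"

end

theory Submission
  imports Defs "HOL-Real_Asymp.Real_Asymp"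
begin

(* The substitution x = eps (m - w), m = ln (a / b) / 2, turns beta_pos eps a b into
   eps^2 * beta_integral (max a b) (min a b), and beta_integral x y = x K (m) - y L (m) with
   K = decay_integral and L = growth_integral. The bounds 0 <= K <= 1/2 and y L (m) <= sqrt (x y) / 2
   give |beta eps a b| <= eps^2 max a b / 2, also on the boundary a b = 0, where beta is defined as a
   limit (which exists because K is monotone). So the beta-term of D_eps vanishes, as does the middle
   term, which carries a factor eps. In the last term hh eps a b q = a P (q / eps) + b P (- q / eps) with
   P = frakh_integral; since frakh s + frakh (- s) = 1 and frakh tends to 1 at infinity, P tends to 1/2
   at +infinity and to 0 at -infinity, so q^2 hh eps a b q tends to alpha0 a b q. *)

lemma interval_integral_affine:
  fixes f :: "real \<Rightarrow> real"
  assumes c: "0 < c"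
  shows "(LBINT x=ereal (t + c * a)..ereal (t + c * b). f x) = c * (LBINT w=ereal a..ereal b. f (t + c * w))"
proof (induct a b rule: linorder_wlog)
  case (sym a b)
  then show ?case
    by (metis interval_integral_endpoints_reverse mult_minus_right)
next
  case (le a b)
  have ind: "indicator {t + c * a<..<t + c * b} (t + c * w) = (indicator {a<..<b} w :: real)" for w
    using c by (auto simp: indicator_def)
  have "(LBINT x=ereal (t + c * a)..ereal (t + c * b). f x)
      = (\<integral>x. indicator {t + c * a<..<t + c * b} x *\<^sub>R f x \<partial>lborel)"
    using le c by (simp add: interval_lebesgue_integral_def set_lebesgue_integral_def)
  also have "\<dots> = \<bar>c\<bar> *\<^sub>R (\<integral>w. indicator {t + c * a<..<t + c * b} (t + c * w) *\<^sub>R f (t + c * w) \<partial>lborel)"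
    using c by (intro lborel_integral_real_affine) simp
  also have "\<dots> = c * (LBINT w=ereal a..ereal b. f (t + c * w))"
    using le c by (simp add: ind interval_lebesgue_integral_def set_lebesgue_integral_def)
  finally show ?case .
qed

lemma interval_integral_scale:
  fixes f :: "real \<Rightarrow> real"
  assumes "0 < c"
  shows "(LBINT x=ereal 0..ereal (c * m). f x) = c * (LBINT w=ereal 0..ereal m. f (c * w))"
  using interval_integral_affine[OF assms, where t=0 and a=0 and b=m and f=f] by simp

lemma interval_integral_reflect_mid:
  fixes f :: "real \<Rightarrow> real"
  shows "(LBINT w=ereal 0..ereal m. f w) = (LBINT w=ereal 0..ereal m. f (m - w))"
proof -
  have "(LBINT w=ereal 0..ereal m. f w) = (LBINT w=ereal (- m)..ereal 0. f (m + w))"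
    using interval_integral_affine[where c=1 and t=m and a="- m" and b=0 and f=f] by simp
  also have "\<dots> = (LBINT w=ereal 0..ereal m. f (m - w))"
    by (subst interval_integral_reflect) simp
  finally show ?thesis .
qed

lemma interval_integral_mono:
  fixes f g :: "real \<Rightarrow> real"
  assumes "a \<le> b" "continuous_on {a..b} f" "continuous_on {a..b} g"
    and "\<And>x. a \<le> x \<Longrightarrow> x \<le> b \<Longrightarrow> f x \<le> g x"
  shows "(LBINT x=ereal a..ereal b. f x) \<le> (LBINT x=ereal a..ereal b. g x)"
proof -
  have "set_integrable lborel {a<..<b} f" "set_integrable lborel {a<..<b} g"
    using interval_integrable_continuous_on[OF assms(1)] assms(2,3)
    by (auto simp: interval_lebesgue_integrable_def assms(1))
  then show ?thesis
    using assms by (auto simp: interval_lebesgue_integral_def intro!: set_integral_mono)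
qed

lemma isCont_if_eq_0:
  fixes f :: "'a::{t2_space, zero} \<Rightarrow> 'b::topological_space"
  assumes "(f \<longlongrightarrow> c) (at 0)" "\<And>x. x \<noteq> 0 \<Longrightarrow> isCont f x"
  shows "isCont (\<lambda>x. if x = 0 then c else f x) x"
proof (cases "x = 0")
  case True
  have "\<forall>\<^sub>F y in at 0. f y = (if y = 0 then c else f y)"
    by (simp add: eventually_at_filter)
  then show ?thesis
    using True assms(1) by (simp add: isCont_def tendsto_cong)
next
  case False
  have "\<forall>\<^sub>F y in nhds x. y \<noteq> 0"
    using eventually_nhds_in_open[of "- {0}" x] False by (simp add: open_Compl)
  then have "\<forall>\<^sub>F y in nhds x. (if y = 0 then c else f y) = f y"
    by (rule eventually_mono) simp
  then show ?thesis
    using assms(2)[OF False] isCont_cong by fastforce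
qed

definition inv_sinhc :: "real \<Rightarrow> real" where
  "inv_sinhc w = (if w = 0 then 1 else w / sinh w)"

lemma inv_sinhc_minus [simp]: "inv_sinhc (- w) = inv_sinhc w"
  by (simp add: inv_sinhc_def)

lemma inv_sinhc_nonneg: "0 \<le> inv_sinhc w"
  by (cases "0 \<le> w") (auto simp: inv_sinhc_def divide_nonneg_nonneg divide_nonpos_nonpos)

lemma inv_sinhc_le_1: "inv_sinhc w \<le> 1"
proof (cases "w = 0")
  case False
  have "\<bar>w\<bar> \<le> \<bar>sinh w\<bar>"
    using real_le_abs_sinh[of w] by (simp add: sinh_field_def exp_minus)
  then have "w / sinh w \<le> 1"
    using False by (cases "0 < w") (auto simp: divide_le_eq_1 abs_if)
  then show ?thesis
    using False by (simp add: inv_sinhc_def)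
qed (simp add: inv_sinhc_def)

lemma isCont_inv_sinhc: "isCont inv_sinhc w"
proof -
  have "((\<lambda>w::real. w / sinh w) \<longlongrightarrow> 1) (at 0)"
    by real_asymp
  then show ?thesis
    unfolding inv_sinhc_def by (rule isCont_if_eq_0) (auto intro!: continuous_intros)
qed

lemma continuous_on_inv_sinhc [continuous_intros]: "continuous_on S inv_sinhc"
  by (simp add: continuous_at_imp_continuous_on isCont_inv_sinhc)

lemma LogMeanH_exp:
  assumes "0 < c"
  shows "LogMeanH (c * exp w) (c * exp (- w)) = c * inv_sinhc w"
proof (cases "w = 0")
  case True
  then show ?thesis
    using assms by (simp add: LogMeanH_def LogMean_def inv_sinhc_def)
next
  case False
  have "c * exp w \<noteq> c * exp (- w)"
    using assms False by simp
  then have LM: "LogMean (c * exp w) (c * exp (- w)) = c * sinh w / w"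
    using assms False by (simp add: LogMean_def ln_mult sinh_field_def field_simps)
  show ?thesis
    unfolding LogMeanH_def LM using assms False by (simp add: inv_sinhc_def field_simps exp_minus)
qed

definition beta_integral :: "real \<Rightarrow> real \<Rightarrow> real" where
  "beta_integral a b =
     (LBINT w=ereal 0..ereal (ln (a / b) / 2). (a * exp (- w) - b * exp w) / 2 * inv_sinhc w)"

lemma beta_pos_eq_beta_integral:
  assumes \<epsilon>: "0 < \<epsilon>" and a: "0 < a" and b: "0 < b"
  shows "beta_pos \<epsilon> a b = \<epsilon>\<^sup>2 * beta_integral a b"
proof -
  define m where "m = ln (a / b) / 2"
  \<comment> \<open>\<open>c = sqrt (a * b)\<close>, so that \<open>a = c * exp m\<close> and \<open>b = c * exp (- m)\<close>\<close>
  define c where "c = a * exp (- m)"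
  have c: "0 < c"
    using a by (simp add: c_def)
  have a_eq: "a = c * exp m"
    by (simp add: c_def exp_minus)
  have b_eq: "b = c * exp (- m)"
  proof -
    have "exp (- m) * exp (- m) = b / a"
      using a b by (simp add: m_def ln_div exp_diff flip: exp_add)
    then show ?thesis
      using a by (simp add: c_def field_simps)
  qed
  have integrand: "sinh (m - w) * LogMeanH (a * exp (- (m - w))) (b * exp (m - w))
      = (a * exp (- w) - b * exp w) / 2 * inv_sinhc w" for w
  proof -
    have "LogMeanH (a * exp (- (m - w))) (b * exp (m - w)) = c * inv_sinhc w"
      using LogMeanH_exp[OF c, of w] by (simp add: a_eq b_eq mult.assoc flip: exp_add)
    moreover have "c * sinh (m - w) = (a * exp (- w) - b * exp w) / 2"
      by (simp add: a_eq b_eq sinh_field_def field_simps flip: exp_add)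
    ultimately show ?thesis
      by (metis mult.assoc mult.commute)
  qed
  have xi: "- \<epsilon> * ln (sqrt (b / a)) = \<epsilon> * m"
    using a b by (simp add: m_def ln_sqrt ln_div field_simps)
  have "beta_pos \<epsilon> a b
      = \<epsilon> * (LBINT x=ereal 0..ereal (\<epsilon> * m). sinh (x / \<epsilon>) * LogMeanH (a * exp (- x / \<epsilon>)) (b * exp (x / \<epsilon>)))"
    unfolding beta_pos_def alpha_star_def xi ..
  also have "\<dots> = \<epsilon>\<^sup>2 * (LBINT w=ereal 0..ereal m. sinh w * LogMeanH (a * exp (- w)) (b * exp w))"
    using \<epsilon> by (simp add: interval_integral_scale power2_eq_square)
  also have "\<dots> = \<epsilon>\<^sup>2 * (LBINT w=ereal 0..ereal m. sinh (m - w) * LogMeanH (a * exp (- (m - w))) (b * exp (m - w)))"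
    by (subst interval_integral_reflect_mid) (rule refl)
  also have "\<dots> = \<epsilon>\<^sup>2 * beta_integral a b"
    by (simp only: integrand) (simp add: beta_integral_def m_def)
  finally show ?thesis .
qed

lemma beta_integral_commute:
  assumes "0 < a" "0 < b"
  shows "beta_integral b a = beta_integral a b"
proof -
  have "ln (b / a) = - ln (a / b)"
    using assms by (simp add: ln_div)
  then show ?thesis
    unfolding beta_integral_def
    by (simp only: minus_divide_left) (subst interval_integral_reflect, subst interval_integral_endpoints_reverse,
        simp add: algebra_simps flip: interval_lebesgue_integral_uminus)
qed

definition decay_integral :: "real \<Rightarrow> real" where
  "decay_integral m = (LBINT w=ereal 0..ereal m. exp (- w) / 2 * inv_sinhc w)"

definition growth_integral :: "real \<Rightarrow> real" where
  "growth_integral m = (LBINT w=ereal 0..ereal m. exp w / 2 * inv_sinhc w)"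

lemma beta_integral_split:
  "beta_integral a b = a * decay_integral (ln (a / b) / 2) - b * growth_integral (ln (a / b) / 2)"
proof -
  have int: "interval_lebesgue_integrable lborel (ereal 0) (ereal m) (\<lambda>w. c * (g w / 2 * inv_sinhc w))"
    if "continuous_on UNIV g" for c m and g :: "real \<Rightarrow> real"
    using that by (intro interval_integrable_isCont)
      (auto intro!: continuous_intros isCont_inv_sinhc simp: continuous_on_eq_continuous_at)
  have "(\<lambda>w. (a * exp (- w) - b * exp w) / 2 * inv_sinhc w)
      = (\<lambda>w. a * (exp (- w) / 2 * inv_sinhc w) - b * (exp w / 2 * inv_sinhc w))"
    by (simp add: fun_eq_iff field_simps)
  then show ?thesis
    unfolding beta_integral_def decay_integral_def growth_integral_def
    by (simp only: interval_lebesgue_integral_diff(2)[OF int int] continuous_intros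
        interval_lebesgue_integral_mult_right)
qed

lemma interval_integral_inv_sinhc_bounds:
  fixes g :: "real \<Rightarrow> real"
  assumes "0 \<le> m" "continuous_on {0..m} g" "\<And>w. 0 \<le> w \<Longrightarrow> w \<le> m \<Longrightarrow> 0 \<le> g w"
  shows "0 \<le> (LBINT w=ereal 0..ereal m. g w * inv_sinhc w)"
    and "(LBINT w=ereal 0..ereal m. g w * inv_sinhc w) \<le> (LBINT w=ereal 0..ereal m. g w)"
proof -
  have "(LBINT w=ereal 0..ereal m. 0) \<le> (LBINT w=ereal 0..ereal m. g w * inv_sinhc w)"
    using assms by (intro interval_integral_mono) (auto intro!: continuous_intros mult_nonneg_nonneg inv_sinhc_nonneg)
  then show "0 \<le> (LBINT w=ereal 0..ereal m. g w * inv_sinhc w)"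
    by simp
  show "(LBINT w=ereal 0..ereal m. g w * inv_sinhc w) \<le> (LBINT w=ereal 0..ereal m. g w)"
    using assms
    by (intro interval_integral_mono) (auto intro!: continuous_intros mult_left_le inv_sinhc_le_1)
qed

lemma decay_integral_bounds:
  assumes "0 \<le> m"
  shows "0 \<le> decay_integral m" "decay_integral m \<le> 1 / 2"
proof -
  have "0 \<le> decay_integral m" "decay_integral m \<le> (LBINT w=ereal 0..ereal m. exp (- w) / 2)"
    unfolding decay_integral_def using assms
    by (auto intro!: interval_integral_inv_sinhc_bounds continuous_intros)
  moreover have "(LBINT w=ereal 0..ereal m. exp (- w) / 2) = - exp (- m) / 2 - (- exp (- 0) / 2)"
    using assms by (intro interval_integral_FTC_finite)
      (auto intro!: continuous_intros derivative_eq_intros simp flip: has_real_derivative_iff_has_vector_derivative)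
  ultimately show "0 \<le> decay_integral m" "decay_integral m \<le> 1 / 2"
    using exp_gt_zero[of "- m"] by (auto simp del: exp_gt_zero)
qed

lemma growth_integral_bounds:
  assumes "0 \<le> m"
  shows "0 \<le> growth_integral m" "growth_integral m \<le> exp m / 2"
proof -
  have "0 \<le> growth_integral m" "growth_integral m \<le> (LBINT w=ereal 0..ereal m. exp w / 2)"
    unfolding growth_integral_def using assms
    by (auto intro!: interval_integral_inv_sinhc_bounds continuous_intros)
  moreover have "(LBINT w=ereal 0..ereal m. exp w / 2) = exp m / 2 - exp 0 / 2"
    using assms by (intro interval_integral_FTC_finite)
      (auto intro!: continuous_intros derivative_eq_intros simp flip: has_real_derivative_iff_has_vector_derivative)
  ultimately show "0 \<le> growth_integral m" "growth_integral m \<le> exp m / 2"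
    by auto
qed

lemma mono_on_decay_integral: "mono_on {0..} decay_integral"
proof (rule mono_onI)
  fix m1 m2 :: real
  assume "m1 \<in> {0..}" "m1 \<le> m2"
  have "interval_lebesgue_integrable lborel (ereal l) (ereal u) (\<lambda>w. exp (- w) / 2 * inv_sinhc w)" for l u
    by (intro interval_integrable_isCont) (auto intro!: continuous_intros isCont_inv_sinhc)
  then have "decay_integral m1 + (LBINT w=ereal m1..ereal m2. exp (- w) / 2 * inv_sinhc w) = decay_integral m2"
    using \<open>m1 \<in> {0..}\<close> \<open>m1 \<le> m2\<close> unfolding decay_integral_def
    by (intro interval_integral_sum) (simp add: min_def max_def)
  moreover have "(LBINT w=ereal m1..ereal m2. 0) \<le> (LBINT w=ereal m1..ereal m2. exp (- w) / 2 * inv_sinhc w)"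
    using \<open>m1 \<le> m2\<close>
    by (intro interval_integral_mono) (auto intro!: continuous_intros mult_nonneg_nonneg inv_sinhc_nonneg)
  ultimately show "decay_integral m1 \<le> decay_integral m2"
    by simp
qed

lemma tendsto_at_top_SUP_mono_on:
  fixes f :: "'a::linorder \<Rightarrow> 'b::{conditionally_complete_linorder, linorder_topology}"
  assumes mono: "mono_on {a..} f" and bdd: "bdd_above (f ` {a..})"
  shows "(f \<longlongrightarrow> (SUP x\<in>{a..}. f x)) at_top"
proof (rule order_tendstoI)
  fix y
  assume "y < (SUP x\<in>{a..}. f x)"
  then obtain x0 where "a \<le> x0" "y < f x0"
    using less_cSUP_iff[OF _ bdd] by auto
  have "y < f x" if "x0 \<le> x" for x
  proof -
    have "f x0 \<le> f x"
      using mono_onD[OF mono, of x0 x] \<open>a \<le> x0\<close> that by simp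
    then show ?thesis
      using less_le_trans[OF \<open>y < f x0\<close>] by blast
  qed
  then show "\<forall>\<^sub>F x in at_top. y < f x"
    unfolding eventually_at_top_linorder by blast
next
  fix y
  assume "(SUP x\<in>{a..}. f x) < y"
  then show "\<forall>\<^sub>F x in at_top. f x < y"
    using cSUP_upper[OF _ bdd] unfolding eventually_at_top_linorder
    by (intro exI[of _ a]) (auto intro: le_less_trans)
qed

\<comment> \<open>Its value is \<open>pi\<^sup>2 / 24\<close>; only the bounds below are needed.\<close>
definition decay_integral_limit :: real where
  "decay_integral_limit = (SUP m\<in>{0..}. decay_integral m)"

lemma decay_integral_tendsto: "(decay_integral \<longlongrightarrow> decay_integral_limit) at_top"
  unfolding decay_integral_limit_def
  using decay_integral_bounds(2)
  by (intro tendsto_at_top_SUP_mono_on mono_on_decay_integral bdd_aboveI[of _ "1 / 2"]) auto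

lemma decay_integral_limit_bounds: "0 \<le> decay_integral_limit" "decay_integral_limit \<le> 1 / 2"
proof -
  have lower: "\<forall>\<^sub>F m in at_top. 0 \<le> decay_integral m"
    using eventually_ge_at_top[of "0::real"] by eventually_elim (rule decay_integral_bounds)
  have upper: "\<forall>\<^sub>F m in at_top. decay_integral m \<le> 1 / 2"
    using eventually_ge_at_top[of "0::real"] by eventually_elim (rule decay_integral_bounds)
  show "0 \<le> decay_integral_limit"
    using tendsto_lowerbound[OF decay_integral_tendsto lower] by simp
  show "decay_integral_limit \<le> 1 / 2"
    using tendsto_upperbound[OF decay_integral_tendsto upper] by simp
qed

lemma growth_term_bounds:
  assumes "0 < b" "b \<le> a"
  shows "0 \<le> b * growth_integral (ln (a / b) / 2)"
    and "b * growth_integral (ln (a / b) / 2) \<le> sqrt (a * b) / 2"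
proof -
  have m: "0 \<le> ln (a / b) / 2"
    using assms by simp
  then show "0 \<le> b * growth_integral (ln (a / b) / 2)"
    using assms growth_integral_bounds(1) by simp
  have "(b * exp (ln (a / b) / 2))\<^sup>2 = a * b"
    using assms by (simp add: power_mult_distrib field_simps power2_eq_square flip: exp_add)
  then have "b * exp (ln (a / b) / 2) = sqrt (a * b)"
    using assms by (intro real_sqrt_unique[symmetric]) auto
  then show "b * growth_integral (ln (a / b) / 2) \<le> sqrt (a * b) / 2"
    using assms growth_integral_bounds(2)[OF m] mult_left_mono[of _ _ b] by fastforce
qed

lemma decay_term_bounds:
  assumes "0 < b" "b \<le> a"
  shows "0 \<le> a * decay_integral (ln (a / b) / 2)" "a * decay_integral (ln (a / b) / 2) \<le> a / 2"
  using assms decay_integral_bounds[of "ln (a / b) / 2"] by (simp_all add: mult_left_le)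

lemma abs_beta_integral_le:
  assumes "0 < b" "b \<le> a"
  shows "\<bar>beta_integral a b\<bar> \<le> a / 2"
proof -
  have "sqrt (a * b) \<le> a"
    using assms real_sqrt_le_mono[of "a * b" "a * a"] by (simp add: mult_left_mono)
  then show ?thesis
    using decay_term_bounds[OF assms] growth_term_bounds[OF assms] unfolding beta_integral_split by linarith
qed

lemma beta_integral_tendsto:
  assumes X: "(X \<longlongrightarrow> x0) F" "0 \<le> x0" and Y: "(Y \<longlongrightarrow> 0) F"
    and ev: "\<forall>\<^sub>F i in F. 0 < Y i \<and> Y i \<le> X i"
  shows "((\<lambda>i. beta_integral (X i) (Y i)) \<longlongrightarrow> x0 * decay_integral_limit) F"
proof -
  let ?m = "\<lambda>i. ln (X i / Y i) / 2"
  have "\<forall>\<^sub>F i in F. 0 \<le> Y i * growth_integral (?m i)"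
    using ev by eventually_elim (metis growth_term_bounds(1))
  moreover have "\<forall>\<^sub>F i in F. Y i * growth_integral (?m i) \<le> sqrt (X i * Y i) / 2"
    using ev by eventually_elim (metis growth_term_bounds(2))
  moreover have "((\<lambda>i. sqrt (X i * Y i) / 2) \<longlongrightarrow> 0) F"
    using tendsto_divide[OF tendsto_real_sqrt[OF tendsto_mult[OF X(1) Y]] tendsto_const[of 2]] by simp
  ultimately have growth: "((\<lambda>i. Y i * growth_integral (?m i)) \<longlongrightarrow> 0) F"
    by (rule tendsto_sandwich[OF _ _ tendsto_const])
  have decay: "((\<lambda>i. X i * decay_integral (?m i)) \<longlongrightarrow> x0 * decay_integral_limit) F"
  proof (cases "x0 = 0")
    case True
    have "\<forall>\<^sub>F i in F. 0 \<le> X i * decay_integral (?m i)"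
      using ev by eventually_elim (metis decay_term_bounds(1))
    moreover have "\<forall>\<^sub>F i in F. X i * decay_integral (?m i) \<le> X i / 2"
      using ev by eventually_elim (metis decay_term_bounds(2))
    moreover have "((\<lambda>i. X i / 2) \<longlongrightarrow> 0) F"
      using tendsto_divide[OF X(1) tendsto_const[of 2]] True by simp
    ultimately have "((\<lambda>i. X i * decay_integral (?m i)) \<longlongrightarrow> 0) F"
      by (rule tendsto_sandwich[OF _ _ tendsto_const])
    then show ?thesis
      by (simp only: True mult_zero_left)
  next
    case False
    have "filterlim Y (at_right 0) F"
      using ev by (intro tendsto_imp_filterlim_at_right[OF Y]) (auto elim: eventually_mono)
    then have "filterlim (\<lambda>i. X i / Y i) at_top F"
      using X False unfolding divide_inverse
      by (intro filterlim_tendsto_pos_mult_at_top[OF X(1)]) (auto intro: filterlim_compose[OF filterlim_inverse_at_top_right])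
    then have "filterlim (\<lambda>i. ln (X i / Y i)) at_top F"
      by (rule filterlim_compose[OF ln_at_top])
    then have "filterlim (\<lambda>i. ln (X i / Y i) * inverse 2) at_top F"
      by (rule filterlim_at_top_mult_tendsto_pos[OF tendsto_const, rotated]) simp
    then have "filterlim ?m at_top F"
      by (simp only: divide_inverse)
    then have "((\<lambda>i. decay_integral (?m i)) \<longlongrightarrow> decay_integral_limit) F"
      by (rule filterlim_compose[OF decay_integral_tendsto])
    then show ?thesis
      by (rule tendsto_mult[OF X(1)])
  qed
  show ?thesis
    using tendsto_diff[OF decay growth] by (simp add: beta_integral_split)
qed

lemma beta_pos_eq_max_min:
  assumes "0 < \<epsilon>" "0 < a" "0 < b"
  shows "beta_pos \<epsilon> a b = \<epsilon>\<^sup>2 * beta_integral (max a b) (min a b)"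
  using beta_pos_eq_beta_integral[OF assms] beta_integral_commute[OF assms(2,3)]
  by (cases "b \<le> a") (simp_all add: max_def min_def)

lemma at_within_positive_quadrant_nontrivial:
  assumes "0 \<le> a" "0 \<le> b"
  shows "at (a, b) within {p :: real \<times> real. 0 < fst p \<and> 0 < snd p} \<noteq> bot"
proof -
  let ?f = "\<lambda>n. (a + inverse (real (Suc n)), b + inverse (real (Suc n)))"
  have "(?f \<longlongrightarrow> (a + 0, b + 0)) sequentially"
    by (intro tendsto_Pair tendsto_add tendsto_const LIMSEQ_inverse_real_of_nat)
  moreover have "\<forall>n. ?f n \<in> {p. 0 < fst p \<and> 0 < snd p} - {(a, b)}"
    using assms by (simp add: add_nonneg_pos)
  ultimately have "(a, b) islimpt {p :: real \<times> real. 0 < fst p \<and> 0 < snd p}"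
    unfolding islimpt_sequential by (intro exI[of _ ?f]) simp
  then show ?thesis
    using trivial_limit_within by blast
qed

lemma beta_on_boundary:
  assumes \<epsilon>: "0 < \<epsilon>" and ab: "0 \<le> a" "0 \<le> b" "\<not> (0 < a \<and> 0 < b)"
  shows "beta \<epsilon> a b = \<epsilon>\<^sup>2 * (max a b * decay_integral_limit)"
proof -
  define Q where "Q = {p :: real \<times> real. 0 < fst p \<and> 0 < snd p}"
  let ?F = "at (a, b) within Q"
  have in_Q: "\<forall>\<^sub>F p in ?F. p \<in> Q"
    by (simp add: eventually_at_filter)
  have fst: "(fst \<longlongrightarrow> a) ?F" and snd: "(snd \<longlongrightarrow> b) ?F"
    using tendsto_fst[OF tendsto_ident_at] tendsto_snd[OF tendsto_ident_at] by auto
  have "min a b = 0"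
    using ab by linarith
  then have min: "((\<lambda>p. min (fst p) (snd p)) \<longlongrightarrow> 0) ?F"
    using tendsto_min[OF fst snd] by simp
  have "\<forall>\<^sub>F p in ?F. 0 < min (fst p) (snd p) \<and> min (fst p) (snd p) \<le> max (fst p) (snd p)"
    using in_Q by eventually_elim (simp add: Q_def)
  then have "((\<lambda>p. beta_integral (max (fst p) (snd p)) (min (fst p) (snd p)))
      \<longlongrightarrow> max a b * decay_integral_limit) ?F"
    using ab by (intro beta_integral_tendsto[OF tendsto_max[OF fst snd] _ min]) auto
  then have "((\<lambda>p. \<epsilon>\<^sup>2 * beta_integral (max (fst p) (snd p)) (min (fst p) (snd p)))
      \<longlongrightarrow> \<epsilon>\<^sup>2 * (max a b * decay_integral_limit)) ?F"
    by (rule tendsto_mult_left)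
  moreover have "\<forall>\<^sub>F p in ?F. \<epsilon>\<^sup>2 * beta_integral (max (fst p) (snd p)) (min (fst p) (snd p))
      = beta_pos \<epsilon> (fst p) (snd p)"
    using in_Q by eventually_elim (simp add: Q_def beta_pos_eq_max_min[OF \<epsilon>])
  ultimately have "((\<lambda>p. beta_pos \<epsilon> (fst p) (snd p)) \<longlongrightarrow> \<epsilon>\<^sup>2 * (max a b * decay_integral_limit)) ?F"
    by (rule Lim_transform_eventually)
  moreover have "beta \<epsilon> a b = Lim ?F (\<lambda>p. beta_pos \<epsilon> (fst p) (snd p))"
    using ab(3) unfolding beta_def Q_def by argo
  ultimately show ?thesis
    using at_within_positive_quadrant_nontrivial[OF ab(1,2)] by (simp add: Q_def tendsto_Lim)
qed

lemma abs_beta_le: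
  assumes "0 < \<epsilon>" "0 \<le> a" "0 \<le> b"
  shows "\<bar>beta \<epsilon> a b\<bar> \<le> \<epsilon>\<^sup>2 * max a b / 2"
proof (cases "0 < a \<and> 0 < b")
  case True
  then have "\<bar>beta_integral (max a b) (min a b)\<bar> \<le> max a b / 2"
    by (intro abs_beta_integral_le) auto
  then show ?thesis
    using True assms(1) by (simp add: beta_def beta_pos_eq_max_min abs_mult mult_left_mono)
next
  case False
  have "max a b * decay_integral_limit \<le> max a b / 2"
    using mult_left_mono[OF decay_integral_limit_bounds(2), of "max a b"] assms by simp
  then show ?thesis
    using False assms decay_integral_limit_bounds
    by (simp add: beta_on_boundary abs_mult mult_left_mono)
qed

lemma beta_tendsto_zero:
  assumes a: "(a \<longlongrightarrow> a0) (at_right 0)" and b: "(b \<longlongrightarrow> b0) (at_right 0)"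
    and nonneg: "\<forall>\<^sub>F \<epsilon> in at_right 0. 0 \<le> a \<epsilon> \<and> 0 \<le> b \<epsilon>"
  shows "((\<lambda>\<epsilon>. beta \<epsilon> (a \<epsilon>) (b \<epsilon>)) \<longlongrightarrow> 0) (at_right 0)"
proof (rule Lim_null_comparison)
  show "\<forall>\<^sub>F \<epsilon> in at_right 0. norm (beta \<epsilon> (a \<epsilon>) (b \<epsilon>)) \<le> \<epsilon>\<^sup>2 * max (a \<epsilon>) (b \<epsilon>) / 2"
    using nonneg eventually_at_right_less[of "0::real"]
    by eventually_elim (subst real_norm_def, rule abs_beta_le, auto)
  have "((\<lambda>\<epsilon>. \<epsilon>\<^sup>2 * max (a \<epsilon>) (b \<epsilon>) / 2) \<longlongrightarrow> 0\<^sup>2 * max a0 b0 / 2) (at_right 0)"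
    by (intro tendsto_divide tendsto_mult tendsto_power tendsto_max a b tendsto_ident_at tendsto_const) simp
  then show "((\<lambda>\<epsilon>. \<epsilon>\<^sup>2 * max (a \<epsilon>) (b \<epsilon>) / 2) \<longlongrightarrow> 0) (at_right 0)"
    by simp
qed

lemma frakh_add_minus: "frakh s + frakh (- s) = 1"
proof (cases "s = 0")
  case False
  define D where "D = 4 * (sinh (s / 2))\<^sup>2"
  have D_eq: "D = exp s + exp (- s) - 2"
    by (simp add: D_def sinh_field_def power2_eq_square field_simps flip: exp_add)
  have "D \<noteq> 0"
    using False by (simp add: D_def)
  moreover have "frakh s = (exp s - 1 - s) / D" "frakh (- s) = (exp (- s) - 1 + s) / D"
    using False by (simp_all add: frakh_def D_def)
  ultimately show ?thesis
    by (simp add: D_eq add_divide_distrib[symmetric])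
qed (simp add: frakh_def)

lemma frakh_nonneg: "0 \<le> frakh s"
proof -
  have "0 \<le> exp s - 1 - s"
    using exp_ge_add_one_self[of s] by linarith
  then show ?thesis
    by (simp add: frakh_def)
qed

lemma frakh_le_1: "frakh s \<le> 1"
  using frakh_add_minus[of s] frakh_nonneg[of "- s"] by simp

lemma isCont_frakh: "isCont frakh s"
proof -
  have "((\<lambda>s::real. (exp s - 1 - s) / (4 * (sinh (s / 2))\<^sup>2)) \<longlongrightarrow> 1 / 2) (at 0)"
    by real_asymp (simp_all add: power2_eq_square)
  then show ?thesis
    unfolding frakh_def by (rule isCont_if_eq_0) (auto intro!: continuous_intros)
qed

lemma continuous_on_frakh [continuous_intros]:
  "continuous_on S f \<Longrightarrow> continuous_on S (\<lambda>x. frakh (f x))"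
  by (rule continuous_on_compose2[of UNIV frakh]) (auto simp: continuous_at_imp_continuous_on isCont_frakh)

lemma borel_measurable_frakh [measurable]: "frakh \<in> borel_measurable borel"
  by (intro borel_measurable_continuous_onI continuous_at_imp_continuous_on ballI isCont_frakh)

lemma frakh_tendsto_at_top: "(frakh \<longlongrightarrow> 1) at_top"
proof -
  have "((\<lambda>s::real. (exp s - 1 - s) / (4 * (sinh (s / 2))\<^sup>2)) \<longlongrightarrow> 1) at_top"
    by real_asymp (simp_all add: power2_eq_square)
  moreover have "\<forall>\<^sub>F s in at_top. (exp s - 1 - s) / (4 * (sinh (s / 2))\<^sup>2) = frakh s"
    using eventually_gt_at_top[of 0] by eventually_elim (simp add: frakh_def)
  ultimately show ?thesis
    by (rule Lim_transform_eventually)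
qed

lemma interval_integral_one_minus: "(LBINT t=ereal 0..ereal 1. 1 - t) = 1 / 2"
proof -
  have "(LBINT t=ereal 0..ereal 1. 1 - t) = (1 - 1\<^sup>2 / 2) - (0 - 0\<^sup>2 / 2)"
    by (intro interval_integral_FTC_finite)
      (auto intro!: continuous_intros derivative_eq_intros simp flip: has_real_derivative_iff_has_vector_derivative)
  then show ?thesis
    by simp
qed

definition frakh_integral :: "real \<Rightarrow> real" where
  "frakh_integral R = (LBINT t=ereal 0..ereal 1. frakh (t * R) * (1 - t))"

lemma interval_integrable_frakh:
  "interval_lebesgue_integrable lborel (ereal 0) (ereal 1) (\<lambda>t. c * (frakh (t * R) * (1 - t)))"
  by (intro interval_integrable_continuous_on) (auto intro!: continuous_intros)

lemma hh_eq_frakh_integral: "hh \<epsilon> a b q = a * frakh_integral (q / \<epsilon>) + b * frakh_integral (- q / \<epsilon>)"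
proof -
  have "(\<lambda>t. (a * frakh (t * q / \<epsilon>) + b * frakh (- t * q / \<epsilon>)) * (1 - t))
      = (\<lambda>t. a * (frakh (t * (q / \<epsilon>)) * (1 - t)) + b * (frakh (t * (- q / \<epsilon>)) * (1 - t)))"
    by (simp add: fun_eq_iff algebra_simps)
  then show ?thesis
    unfolding hh_def frakh_integral_def
    by (simp only: interval_lebesgue_integral_add(2)[OF interval_integrable_frakh interval_integrable_frakh]
        interval_lebesgue_integral_mult_right)
qed

lemma frakh_integral_add_minus: "frakh_integral R + frakh_integral (- R) = 1 / 2"
proof -
  have sum_eq: "1 * (frakh (t * R) * (1 - t)) + 1 * (frakh (t * - R) * (1 - t)) = 1 - t" for t
  proof -
    have "1 * (frakh (t * R) * (1 - t)) + 1 * (frakh (t * - R) * (1 - t))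
        = (frakh (t * R) + frakh (- (t * R))) * (1 - t)"
      by (simp add: algebra_simps)
    then show ?thesis
      by (simp add: frakh_add_minus)
  qed
  have "frakh_integral R + frakh_integral (- R)
      = (LBINT t=ereal 0..ereal 1. 1 * (frakh (t * R) * (1 - t)) + 1 * (frakh (t * - R) * (1 - t)))"
    unfolding frakh_integral_def
    by (subst interval_lebesgue_integral_add(2)[OF interval_integrable_frakh interval_integrable_frakh]) simp
  also have "\<dots> = (LBINT t=ereal 0..ereal 1. 1 - t)"
    by (simp only: sum_eq)
  finally show ?thesis
    by (simp only: interval_integral_one_minus)
qed

lemma frakh_integral_nonneg: "0 \<le> frakh_integral R"
proof -
  have "(LBINT t=ereal 0..ereal 1. 0) \<le> frakh_integral R"
    unfolding frakh_integral_def
    by (intro interval_integral_mono) (auto intro!: continuous_intros mult_nonneg_nonneg frakh_nonneg)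
  then show ?thesis
    by simp
qed

lemma frakh_integral_le: "frakh_integral R \<le> 1 / 2"
  using frakh_integral_add_minus[of R] frakh_integral_nonneg[of "- R"] by linarith

lemma frakh_integral_tendsto_at_top: "(frakh_integral \<longlongrightarrow> 1 / 2) at_top"
proof -
  define g where "g = (\<lambda>R t :: real. indicator {0<..<1} t *\<^sub>R (frakh (t * R) * (1 - t)))"
  have frakh_integral_eq: "frakh_integral R = integral\<^sup>L lborel (g R)" for R
    by (simp add: g_def frakh_integral_def interval_lebesgue_integral_def set_lebesgue_integral_def)
  have "((\<lambda>R. integral\<^sup>L lborel (g R)) \<longlongrightarrow> (\<integral>t. indicator {0<..<1} t *\<^sub>R (1 - t) \<partial>lborel)) at_top"
  proof (rule integral_dominated_convergence_at_top[where w="indicator {0<..<1}"])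
    show "g R \<in> borel_measurable lborel" for R
      unfolding g_def by measurable
    show "(\<lambda>t::real. indicator {0<..<1} t *\<^sub>R (1 - t)) \<in> borel_measurable lborel"
      by measurable
    show "integrable lborel (indicator {0<..<1::real} :: real \<Rightarrow> real)"
      by simp
    show "\<forall>\<^sub>F R in at_top. AE t in lborel. norm (g R t) \<le> indicator {0<..<1::real} t"
      using frakh_nonneg frakh_le_1
      by (intro always_eventually allI AE_I2) (auto simp: g_def indicator_def mult_le_one)
    show "AE t in lborel. ((\<lambda>R. g R t) \<longlongrightarrow> indicator {0<..<1} t *\<^sub>R (1 - t)) at_top"
    proof (intro AE_I2)
      fix t :: real
      show "((\<lambda>R. g R t) \<longlongrightarrow> indicator {0<..<1} t *\<^sub>R (1 - t)) at_top"
      proof (cases "t \<in> {0<..<1}")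
        case True
        then have "filterlim (\<lambda>R. t * R) at_top at_top"
          by (intro filterlim_tendsto_pos_mult_at_top[OF tendsto_const _ filterlim_ident]) simp
        then have "((\<lambda>R. frakh (t * R) * (1 - t)) \<longlongrightarrow> 1 * (1 - t)) at_top"
          by (intro tendsto_mult_right filterlim_compose[OF frakh_tendsto_at_top])
        then show ?thesis
          using True by (simp add: g_def)
      qed (simp add: g_def)
    qed
  qed
  moreover have "(\<integral>t. indicator {0<..<1} t *\<^sub>R (1 - t) \<partial>lborel) = (1 / 2 :: real)"
    using interval_integral_one_minus by (simp add: interval_lebesgue_integral_def set_lebesgue_integral_def)
  ultimately show ?thesis
    by (simp only: frakh_integral_eq[abs_def])
qed

lemma frakh_integral_tendsto_at_bot: "(frakh_integral \<longlongrightarrow> 0) at_bot"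
proof -
  have "((\<lambda>R. 1 / 2 - frakh_integral (- R)) \<longlongrightarrow> 1 / 2 - 1 / 2) at_bot"
    by (intro tendsto_diff tendsto_const filterlim_compose[OF frakh_integral_tendsto_at_top]
        filterlim_uminus_at_top_at_bot)
  moreover have "1 / 2 - frakh_integral (- R) = frakh_integral R" for R
    using frakh_integral_add_minus[of R] by simp
  ultimately show ?thesis
    by simp
qed

lemma frakh_integral_scaled_tendsto:
  assumes q: "(q \<longlongrightarrow> q0) (at_right 0)" and "q0 \<noteq> 0"
  shows "((\<lambda>\<epsilon>. frakh_integral (q \<epsilon> / \<epsilon>)) \<longlongrightarrow> (if 0 < q0 then 1 / 2 else 0)) (at_right 0)"
proof (cases "0 < q0")
  case True
  then have "filterlim (\<lambda>\<epsilon>. q \<epsilon> / \<epsilon>) at_top (at_right 0)"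
    unfolding divide_inverse by (rule filterlim_tendsto_pos_mult_at_top[OF q _ filterlim_inverse_at_top_right])
  then show ?thesis
    using True by (simp add: filterlim_compose[OF frakh_integral_tendsto_at_top])
next
  case False
  then have "filterlim (\<lambda>\<epsilon>. - q \<epsilon> / \<epsilon>) at_top (at_right 0)"
    using \<open>q0 \<noteq> 0\<close> unfolding divide_inverse
    by (intro filterlim_tendsto_pos_mult_at_top[OF tendsto_minus[OF q] _ filterlim_inverse_at_top_right]) simp
  then have "filterlim (\<lambda>\<epsilon>. q \<epsilon> / \<epsilon>) at_bot (at_right 0)"
    by (simp add: filterlim_uminus_at_bot)
  then show ?thesis
    using False by (simp add: filterlim_compose[OF frakh_integral_tendsto_at_bot])
qed

lemma sq_frakh_integral_tendsto:
  assumes q: "(q \<longlongrightarrow> q0) (at_right 0)"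
  shows "((\<lambda>\<epsilon>. (q \<epsilon>)\<^sup>2 * frakh_integral (q \<epsilon> / \<epsilon>)) \<longlongrightarrow> (max q0 0)\<^sup>2 / 2) (at_right 0)"
proof (cases "q0 = 0")
  case True
  have "((\<lambda>\<epsilon>. (q \<epsilon>)\<^sup>2 * frakh_integral (q \<epsilon> / \<epsilon>)) \<longlongrightarrow> 0) (at_right 0)"
  proof (rule Lim_null_comparison)
    show "\<forall>\<^sub>F \<epsilon> in at_right 0. norm ((q \<epsilon>)\<^sup>2 * frakh_integral (q \<epsilon> / \<epsilon>)) \<le> (q \<epsilon>)\<^sup>2 / 2"
    proof (intro always_eventually allI)
      fix \<epsilon> :: real
      show "norm ((q \<epsilon>)\<^sup>2 * frakh_integral (q \<epsilon> / \<epsilon>)) \<le> (q \<epsilon>)\<^sup>2 / 2"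
        using mult_left_mono[OF frakh_integral_le, of "(q \<epsilon>)\<^sup>2"] frakh_integral_nonneg[of "q \<epsilon> / \<epsilon>"]
        by (simp add: abs_mult)
    qed
    show "((\<lambda>\<epsilon>. (q \<epsilon>)\<^sup>2 / 2) \<longlongrightarrow> 0) (at_right 0)"
      using tendsto_divide[OF tendsto_power[OF q, of 2] tendsto_const[of 2]] True by simp
  qed
  then show ?thesis
    using True by simp
next
  case False
  have "((\<lambda>\<epsilon>. (q \<epsilon>)\<^sup>2 * frakh_integral (q \<epsilon> / \<epsilon>)) \<longlongrightarrow> q0\<^sup>2 * (if 0 < q0 then 1 / 2 else 0)) (at_right 0)"
    by (rule tendsto_mult[OF tendsto_power[OF q] frakh_integral_scaled_tendsto[OF q False]])
  moreover have "q0\<^sup>2 * (if 0 < q0 then 1 / 2 else 0) = (max q0 0)\<^sup>2 / 2"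
    by (simp add: max_def)
  ultimately show ?thesis
    by simp
qed

lemma sq_hh_tendsto:
  assumes a: "(a \<longlongrightarrow> a0) (at_right 0)" and b: "(b \<longlongrightarrow> b0) (at_right 0)"
    and q: "(q \<longlongrightarrow> q0) (at_right 0)"
  shows "((\<lambda>\<epsilon>. (q \<epsilon>)\<^sup>2 * hh \<epsilon> (a \<epsilon>) (b \<epsilon>) (q \<epsilon>)) \<longlongrightarrow> alpha0 a0 b0 q0) (at_right 0)"
proof -
  have "(q \<epsilon>)\<^sup>2 * hh \<epsilon> (a \<epsilon>) (b \<epsilon>) (q \<epsilon>)
      = a \<epsilon> * ((q \<epsilon>)\<^sup>2 * frakh_integral (q \<epsilon> / \<epsilon>)) + b \<epsilon> * ((- q \<epsilon>)\<^sup>2 * frakh_integral (- q \<epsilon> / \<epsilon>))" for \<epsilon>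
    by (simp add: hh_eq_frakh_integral algebra_simps)
  moreover have "((\<lambda>\<epsilon>. a \<epsilon> * ((q \<epsilon>)\<^sup>2 * frakh_integral (q \<epsilon> / \<epsilon>))
      + b \<epsilon> * ((- q \<epsilon>)\<^sup>2 * frakh_integral (- q \<epsilon> / \<epsilon>)))
      \<longlongrightarrow> a0 * ((max q0 0)\<^sup>2 / 2) + b0 * ((max (- q0) 0)\<^sup>2 / 2)) (at_right 0)"
    using tendsto_add[OF tendsto_mult[OF a sq_frakh_integral_tendsto[OF q]]
        tendsto_mult[OF b sq_frakh_integral_tendsto[OF tendsto_minus[OF q]]]] by simp
  ultimately show ?thesis
    by (simp add: alpha0_def add_divide_distrib)
qed

lemma alpha0_half: "alpha0 a b (q / 2) = alpha0 a b q / 4"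
  by (simp add: alpha0_def max_def power_divide)

theorem lemma5p4:
  fixes \<Omega> :: "'a::euclidean_space set"
    and T :: "'a set set"
    and V W :: "'a \<Rightarrow> real"
    and rho_eps :: "real \<Rightarrow> 'a set \<Rightarrow> real"
    and rho :: "'a set \<Rightarrow> real"
  assumes tess: "tessellation \<Omega> T"
    and nondeg: "nondegenerate T"
    and V_lip: "\<exists>C. C-lipschitz_on UNIV V"
    and V_C1: "\<exists>V'. (\<forall>x. (V has_derivative blinfun_apply (V' x)) (at x)) \<and> continuous_on UNIV V'"
    and V_bdd: "bdd_below (range V)"
    and W_nonneg: "\<And>x. 0 \<le> W x"
    and W_sym: "\<And>x. W (- x) = W x"
    and W_lip: "\<exists>C. C-lipschitz_on UNIV W"
    and W_C1: "\<exists>W'. (\<forall>x. x \<noteq> 0 \<longrightarrow> (W has_derivative blinfun_apply (W' x)) (at x))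
                    \<and> continuous_on (- {0}) W'"
    and rho_eps_prob: "\<And>\<epsilon>. 0 < \<epsilon> \<Longrightarrow> prob_on T (rho_eps \<epsilon>)"
    and rho_prob: "prob_on T rho"
    and conv: "\<And>K. K \<in> T \<Longrightarrow> ((\<lambda>\<epsilon>. rho_eps \<epsilon> K) \<longlongrightarrow> rho K) (at_right 0)"
  shows "((\<lambda>\<epsilon>. D_eps \<epsilon> V W T (rho_eps \<epsilon>)) \<longlongrightarrow> D_up V W T rho) (at_right 0)"
proof -
  let ?u = "\<lambda>\<epsilon>. dens (rho_eps \<epsilon>)" and ?q = "\<lambda>\<epsilon>. qKL V W T (rho_eps \<epsilon>)"
  have cells: "fst e \<in> T" "snd e \<in> T" if "e \<in> edges T" for e
    using that by (auto simp: edges_def)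
  have u: "((\<lambda>\<epsilon>. ?u \<epsilon> K) \<longlongrightarrow> dens rho K) (at_right 0)" if "K \<in> T" for K
    using tendsto_mult_right[OF conv[OF that], of "inverse (vol K)"] by (simp only: dens_def divide_inverse)
  have u_nonneg: "\<forall>\<^sub>F \<epsilon> in at_right 0. 0 \<le> ?u \<epsilon> K" if "K \<in> T" for K
    using eventually_at_right_less[of "0::real"]
    by eventually_elim (use rho_eps_prob that in \<open>simp add: prob_on_def dens_def vol_def\<close>)
  have q: "((\<lambda>\<epsilon>. ?q \<epsilon> K L) \<longlongrightarrow> qKL V W T rho K L) (at_right 0)" for K L
    unfolding qKL_def by (intro tendsto_intros tendsto_sum conv)
  have beta_sum: "((\<lambda>\<epsilon>. \<Sum>e\<in>edges T. beta \<epsilon> (?u \<epsilon> (fst e)) (?u \<epsilon> (snd e)) * tau (fst e) (snd e))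
      \<longlongrightarrow> 0) (at_right 0)"
    using cells by (intro tendsto_null_sum tendsto_mult_left_zero beta_tendsto_zero[OF u u] eventually_conj u_nonneg) auto
  have drift_sum: "((\<lambda>\<epsilon>. \<Sum>e\<in>edges T. (?u \<epsilon> (snd e) - ?u \<epsilon> (fst e)) * ?q \<epsilon> (fst e) (snd e) * tau (fst e) (snd e))
      \<longlongrightarrow> (\<Sum>e\<in>edges T. (dens rho (snd e) - dens rho (fst e)) * qKL V W T rho (fst e) (snd e)
        * tau (fst e) (snd e))) (at_right 0)"
    by (intro tendsto_sum tendsto_intros u q cells)
  have hh_sum: "((\<lambda>\<epsilon>. \<Sum>e\<in>edges T. (?q \<epsilon> (fst e) (snd e))\<^sup>2
        * hh \<epsilon> (?u \<epsilon> (fst e)) (?u \<epsilon> (snd e)) (?q \<epsilon> (fst e) (snd e)) * tau (fst e) (snd e))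
      \<longlongrightarrow> (\<Sum>e\<in>edges T. alpha0 (dens rho (fst e)) (dens rho (snd e)) (qKL V W T rho (fst e) (snd e))
        * tau (fst e) (snd e))) (at_right 0)"
    by (intro tendsto_sum tendsto_mult_right sq_hh_tendsto u q cells)
  have "((\<lambda>\<epsilon>::real. \<epsilon> / 2) \<longlongrightarrow> 0) (at_right 0)"
    by real_asymp
  from tendsto_add[OF tendsto_add[OF tendsto_mult_left[OF beta_sum] tendsto_mult[OF this drift_sum]]
      tendsto_mult_left[OF hh_sum, of "1 / 2"]]
  show ?thesis
    by (simp add: D_eps_def D_up_def case_prod_unfold alpha0_half sum_distrib_left mult_ac)
qed

end
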